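(* Let $p\in\mathbb{N}$ and let $a,b,\alpha,\beta$ be positive real numbers such that $\alpha+\beta t>1$ for all $t\in(0,\infty)$. Define \[ \Omega(t)=\frac{p^{b\beta t}e^{a\beta\gamma t}\,\Gamma(\alpha+\beta t)^a}{\Gamma_p(\alpha+\beta t)^b},\qquad t\in(0,\infty). \] Then $\Omega$ is increasing on $(0,\infty)$, and for every $t\in(0,1)$, \[ \frac{p^{-b\beta t}e^{-a\beta\gamma t}\,\Gamma(\alpha)^a}{\Gamma_p(\alpha)^b} <\frac{\Gamma(\alpha+\beta t)^a}{\Gamma_p(\alpha+\beta t)^b} <\frac{p^{b\beta(1-t)}e^{a\beta\gamma(1-t)}\,\Gamma(\alpha+\beta)^a}{\Gamma_p(\alpha+\beta)^b}. \]
   Context: $\Gamma$ is Euler's Gamma function and $\gamma$ is the Euler–Mascheroni constant. For $p\in\mathbb{N}$ and $t>0$, the $p$-Gamma function is $\Gamma_p(t)=\frac{p!\,p^t}{t(t+1)\cdots(t+p)}$. *)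

theory Defs
  imports "HOL-Analysis.Analysis"
begin

definition Gamma_p :: "nat \<Rightarrow> real \<Rightarrow> real" where
  "Gamma_p p t = fact p * real p powr t / (\<Prod>k\<in>{0..p}. (t + real k))"

end

theory Submission imports Defs begin

text \<open>Taking logarithms, \<open>\<Omega>(t) = c \<cdot> \<phi>(\<alpha> + \<beta> t)\<close> with \<open>c > 0\<close> and
  \<open>ln \<phi>(x) = a (\<gamma> x + ln \<Gamma>(x)) + b \<Sum>\<^sub>k\<^sub>=\<^sub>0\<^sup>p ln (x + k) - b ln p!\<close>.
  Since \<open>(\<gamma> x + ln \<Gamma>(x))' = \<gamma> + \<psi>(x) > \<gamma> + \<psi>(1) = 0\<close> for \<open>x > 1\<close>, \<open>\<phi>\<close> is strictly
  increasing on \<open>[1, \<infinity>)\<close>, and the hypothesis forces \<open>\<alpha> \<ge> 1\<close>. The two-sided bound is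
  \<open>\<Omega>(0) < \<Omega>(t) < \<Omega>(1)\<close> divided by the exponential factor \<open>p\<^bsup>b\<beta>t\<^esup> e\<^bsup>a\<beta>\<gamma>t\<^esup>\<close>.\<close>

lemma euler_mascheroni_ln_Gamma_strict_mono:
  "strict_mono_on {1..} (\<lambda>x::real. euler_mascheroni * x + ln_Gamma x)"
proof (rule strict_mono_onI)
  fix x y :: real
  assume "x \<in> {1..}" "y \<in> {1..}" "x < y"
  then have x: "1 \<le> x" and "x < y" by auto
  have "\<exists>\<xi>. x < \<xi> \<and> \<xi> < y \<and> (euler_mascheroni * y + ln_Gamma y) - (euler_mascheroni * x + ln_Gamma x)
      = (y - x) * (euler_mascheroni + Digamma \<xi>)"
    using x \<open>x < y\<close> by (intro MVT2 derivative_intros impI allI) (auto elim!: nonpos_Ints_cases)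
  then obtain \<xi> where \<xi>: "x < \<xi>" "\<xi> < y" and mvt:
    "(euler_mascheroni * y + ln_Gamma y) - (euler_mascheroni * x + ln_Gamma x)
       = (y - x) * (euler_mascheroni + Digamma \<xi>)"
    by blast
  have "Digamma (1::real) < Digamma \<xi>"
    using \<xi> x by (intro Digamma_real_strict_mono) auto
  then have "euler_mascheroni + Digamma \<xi> > 0" by simp
  with mvt \<open>x < y\<close> show "euler_mascheroni * x + ln_Gamma x < euler_mascheroni * y + ln_Gamma y"
    by (smt (verit) mult_pos_pos)
qed

lemma Gamma_p_pos:
  assumes "p \<ge> 1" "x > 0"
  shows "Gamma_p p x > 0"
  using assms unfolding Gamma_p_def by (auto intro!: prod_pos divide_pos_pos)

lemma ln_Gamma_p:
  assumes "p \<ge> 1" "x > 0"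
  shows "ln (Gamma_p p x) = ln (fact p) + x * ln (real p) - (\<Sum>k\<in>{0..p}. ln (x + real k))"
proof -
  have "(\<Prod>k\<in>{0..p}. x + real k) > 0"
    using assms by (intro prod_pos) auto
  moreover have "ln (\<Prod>k\<in>{0..p}. x + real k) = (\<Sum>k\<in>{0..p}. ln (x + real k))"
    using assms by (intro ln_prod) auto
  ultimately show ?thesis
    using assms unfolding Gamma_p_def by (simp add: ln_div ln_mult ln_powr)
qed

lemma powr_exp_Gamma_div_Gamma_p_eq_exp:
  fixes a b x :: real
  assumes "p \<ge> 1" "x > 0"
  shows "real p powr (b * x) * exp (a * euler_mascheroni * x) * Gamma x powr a / Gamma_p p x powr b
    = exp (a * (euler_mascheroni * x + ln_Gamma x) + b * (\<Sum>k\<in>{0..p}. ln (x + real k))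
           - b * ln (fact p))"
proof -
  have "real p > 0" using assms by simp
  moreover have "Gamma x powr a = exp (a * ln_Gamma x)"
    using assms by (simp add: powr_def Gamma_real_pos_exp)
  moreover have "Gamma_p p x powr b = exp (b * ln (Gamma_p p x))"
    using Gamma_p_pos[OF assms] by (simp add: powr_def)
  ultimately show ?thesis
    using assms by (simp add: powr_def ln_Gamma_p exp_add[symmetric] exp_diff[symmetric]
        algebra_simps)
qed

lemma strict_mono_on_powr_exp_Gamma_div_Gamma_p:
  fixes a b :: real
  assumes "p \<ge> 1" "a > 0" "b \<ge> 0"
  shows "strict_mono_on {1..} (\<lambda>x. real p powr (b * x) * exp (a * euler_mascheroni * x)
           * Gamma x powr a / Gamma_p p x powr b)"
proof (rule strict_mono_onI)
  fix x y :: real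
  assume "x \<in> {1..}" "y \<in> {1..}" "x < y"
  then have x: "1 \<le> x" and "x < y" by auto
  have "a * (euler_mascheroni * x + ln_Gamma x) < a * (euler_mascheroni * y + ln_Gamma y)"
    using euler_mascheroni_ln_Gamma_strict_mono x \<open>x < y\<close> \<open>a > 0\<close>
    by (simp add: strict_mono_on_def)
  moreover have "b * (\<Sum>k\<in>{0..p}. ln (x + real k)) \<le> b * (\<Sum>k\<in>{0..p}. ln (y + real k))"
    using x \<open>x < y\<close> \<open>b \<ge> 0\<close> by (intro mult_left_mono sum_mono) auto
  ultimately show "real p powr (b * x) * exp (a * euler_mascheroni * x) * Gamma x powr a / Gamma_p p x powr b
    < real p powr (b * y) * exp (a * euler_mascheroni * y) * Gamma y powr a / Gamma_p p y powr b"
    using x \<open>x < y\<close> \<open>p \<ge> 1\<close> by (simp add: powr_exp_Gamma_div_Gamma_p_eq_exp)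
qed

lemma exp_weighted_bounds_if_strict_mono_on:
  fixes \<kappa> :: real and \<rho> :: "real \<Rightarrow> real"
  assumes "strict_mono_on {0..} (\<lambda>t. exp (\<kappa> * t) * \<rho> t)" "0 < t" "t < 1"
  shows "exp (- \<kappa> * t) * \<rho> 0 < \<rho> t \<and> \<rho> t < exp (\<kappa> * (1 - t)) * \<rho> 1"
proof -
  have "\<rho> 0 < exp (\<kappa> * t) * \<rho> t" "exp (\<kappa> * t) * \<rho> t < exp \<kappa> * \<rho> 1"
    using assms strict_mono_onD[OF assms(1), of 0 t] strict_mono_onD[OF assms(1), of t 1] by auto
  then show ?thesis
    by (simp add: exp_minus exp_diff right_diff_distrib field_simps)
qed

theorem theorem3p7:
  fixes p :: nat and a b \<alpha> \<beta> :: real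
  assumes hp: "p \<ge> 1"
    and ha: "a > 0" and hb: "b > 0" and h\<alpha>: "\<alpha> > 0" and h\<beta>: "\<beta> > 0"
    and hgt: "\<forall>t::real. t > 0 \<longrightarrow> \<alpha> + \<beta> * t > 1"
  defines "\<Omega> \<equiv> (\<lambda>t::real. real p powr (b * \<beta> * t) * exp (a * \<beta> * euler_mascheroni * t)
              * Gamma (\<alpha> + \<beta> * t) powr a / Gamma_p p (\<alpha> + \<beta> * t) powr b)"
  shows "strict_mono_on {0<..} \<Omega>
    \<and> (\<forall>t::real. 0 < t \<and> t < 1 \<longrightarrow>
        real p powr (- b * \<beta> * t) * exp (- a * \<beta> * euler_mascheroni * t)
          * Gamma \<alpha> powr a / Gamma_p p \<alpha> powr b
        < Gamma (\<alpha> + \<beta> * t) powr a / Gamma_p p (\<alpha> + \<beta> * t) powr b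
      \<and> Gamma (\<alpha> + \<beta> * t) powr a / Gamma_p p (\<alpha> + \<beta> * t) powr b
        < real p powr (b * \<beta> * (1 - t)) * exp (a * \<beta> * euler_mascheroni * (1 - t))
          * Gamma (\<alpha> + \<beta>) powr a / Gamma_p p (\<alpha> + \<beta>) powr b)"
proof -
  define \<phi> where "\<phi> x = real p powr (b * x) * exp (a * euler_mascheroni * x)
    * Gamma x powr a / Gamma_p p x powr b" for x
  define c where "c = real p powr (- b * \<alpha>) * exp (- a * euler_mascheroni * \<alpha>)"
  have "\<alpha> \<ge> 1"
    using hgt[rule_format, of "(1 - \<alpha>) / \<beta>"] h\<beta> by (cases "\<alpha> < 1") auto
  have "c > 0" "\<Omega> t = c * \<phi> (\<alpha> + \<beta> * t)" for t
    using hp unfolding \<Omega>_def \<phi>_def c_def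
    by (simp_all add: powr_def exp_add[symmetric] algebra_simps)
  moreover have "\<phi> (\<alpha> + \<beta> * s) < \<phi> (\<alpha> + \<beta> * t)" if "0 \<le> s" "s < t" for s t
    using strict_mono_onD[OF strict_mono_on_powr_exp_Gamma_div_Gamma_p[OF hp ha less_imp_le[OF hb]]]
      \<open>\<alpha> \<ge> 1\<close> h\<beta> that
    unfolding \<phi>_def by (simp add: add_increasing2)
  ultimately have \<Omega>_strict_mono: "strict_mono_on {0..} \<Omega>"
    by (intro strict_mono_onI) auto
  define \<kappa> where "\<kappa> = b * \<beta> * ln (real p) + a * \<beta> * euler_mascheroni"
  define \<rho> where "\<rho> t = Gamma (\<alpha> + \<beta> * t) powr a / Gamma_p p (\<alpha> + \<beta> * t) powr b" for t
  have "\<Omega> = (\<lambda>t. exp (\<kappa> * t) * \<rho> t)"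
    using hp by (auto simp: \<Omega>_def \<kappa>_def \<rho>_def powr_def exp_add algebra_simps)
  moreover have "real p powr (- b * \<beta> * t) * exp (- a * \<beta> * euler_mascheroni * t) = exp (- \<kappa> * t)"
    and "real p powr (b * \<beta> * (1 - t)) * exp (a * \<beta> * euler_mascheroni * (1 - t))
           = exp (\<kappa> * (1 - t))" for t
    using hp by (simp_all add: \<kappa>_def powr_def exp_add[symmetric] algebra_simps)
  ultimately show ?thesis
    using \<Omega>_strict_mono exp_weighted_bounds_if_strict_mono_on[of \<kappa> \<rho>]
    by (auto simp: \<rho>_def mult.assoc intro: monotone_on_subset)
qed

end
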